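(* Let $G$ be a marked ribbon graph (with exactly one marked vertex) decorated with arrows and edge weights $\mathbf b=(b_e)$, let $F\subseteq E(G)$, and let $G^F$ be the partial dual of $G$ with respect to $F$. Then \[R_G(1,\mathbf b,c)=\Big(\prod_{e\in F}b_e\Big)\,R_{G^F}(1,\mathbf b',c),\qquad b'_e=\begin{cases}b_e & e\notin F,\\ 1/b_e & e\in F.\end{cases}\]
   Context: A ribbon graph $G=(V(G),E(G))$ is a surface with boundary that is a union of discs, the vertices $V(G)$ and the edges $E(G)$, such that vertices and edges intersect in disjoint line segments, each segment lies on exactly one vertex and one edge, and each edge contains exactly two such segments (its attaching arcs). A marked ribbon graph is a ribbon graph in which some vertices carry a single marking, a point on the vertex boundary away from the attaching arcs, together with an orientation of that vertex boundary. Arrows may lie anywhere on the boundaries of vertices and edges (including on attaching arcs), each pointing in one of the two directions along the boundary. Partial duality: for an edge $e$, $G^{\{e\}}$ is obtained by removing the two attaching arcs of $e$, declaring the two remaining (previously free) boundary arcs of $e$ to be new vertex arcs, and attaching a new edge disc along new attaching arcs parallel to the removed ones; arrows and markings are kept in place, those lying on removed attaching arcs being placed on the corresponding new edge arcs. For $F\subseteq E(G)$, $G^F$ is obtained by doing this for every $e\in F$. Edges of $G^F$ are identified with those of $G$. For a spanning subgraph $F\subseteq E(G)$, $k(F)$ is its number of connected components and $\mathrm{bc}(F)$ its number of boundary components. Exactly one boundary component passes through the marking; the others form $\partial^c(F)$. Arrows on a boundary component are reduced by cancelling two consecutive arrows pointing in the same direction; a circular component then has $2j$ alternating arrows and contributes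 $K_j$; the marked component, read from the marking along the given orientation, has $2j$ alternating arrows and contributes $\Lambda_j$ if the first arrow points along the orientation and $\Lambda_j'$ otherwise; $K_0=\Lambda_0=\Lambda_0'=1$. The arrow Bollobás–Riordan polynomial is \[R_G(a,\mathbf b,c)=\sum_{F\subseteq E(G)} a^{k(F)}\Big(\prod_{e\in F}b_e\Big)c^{\mathrm{bc}(F)}\Big(\prod_{f\in\partial^c(F)}K_{j(f)}\Big)\Lambda^{(\prime)}_{j(F)}.\] *)

theory Defs
  imports Main
begin

text \<open>
The boundary of every vertex disc and every edge disc is cut into arcs at a
finite set of points \<open>Pts\<close> (the endpoints of the attaching arcs).  Three
fixed-point-free involutions describe the arcs:
 \<^item> \<open>vx\<close>  : \<open>p\<close> and \<open>vx p\<close> are the two ends of a vertex arc;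
 \<^item> \<open>att\<close> : \<open>p\<close> and \<open>att p\<close> are the two ends of an attaching arc (of edge
          \<open>edge_of p\<close>);  for points with \<open>edge_of p = None\<close> (used e.g. to
          represent isolated vertices) \<open>att\<close> just joins two vertex arcs;
 \<^item> \<open>fre\<close>  : \<open>p\<close> and \<open>fre p\<close> are the two ends of a free (non-attaching)
          boundary arc of the edge \<open>edge_of p\<close>.
Each edge has exactly four such points, its boundary being the 4-cycle
attaching arc / free arc / attaching arc / free arc.  Twisted edges and
non-orientable surfaces are covered since no orientation is assumed.

Arrows on an arc are a word \<open>wvx p\<close> (resp. \<open>watt p\<close>, \<open>wfre p\<close>) read from
\<open>p\<close> to the other end; \<open>True\<close> means the arrow points from \<open>p\<close> towards the
other end.  The marking lies on the vertex arc from \<open>mpt\<close> to \<open>vx mpt\<close>, after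
the first \<open>mpos\<close> arrows of \<open>wvx mpt\<close>, and the orientation of the marked
vertex boundary at the marking points from \<open>mpt\<close> towards \<open>vx mpt\<close>.
\<close>

record ('p, 'e) arrow_rg =
  Pts :: "'p set"
  Edges :: "'e set"
  edge_of :: "'p \<Rightarrow> 'e option"
  vx :: "'p \<Rightarrow> 'p"
  att :: "'p \<Rightarrow> 'p"
  fre :: "'p \<Rightarrow> 'p"
  wvx :: "'p \<Rightarrow> bool list"
  watt :: "'p \<Rightarrow> bool list"
  wfre :: "'p \<Rightarrow> bool list"
  mpt :: 'p
  mpos :: nat

definition edge_pts :: "('p, 'e) arrow_rg \<Rightarrow> 'e \<Rightarrow> 'p set" where
  "edge_pts G e = {p \<in> Pts G. edge_of G p = Some e}"

definition fpf_inv_on :: "('p \<Rightarrow> 'p) \<Rightarrow> 'p set \<Rightarrow> bool" where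
  "fpf_inv_on f A \<longleftrightarrow> (\<forall>p\<in>A. f p \<in> A \<and> f (f p) = p \<and> f p \<noteq> p)"

definition rev_word :: "bool list \<Rightarrow> bool list" where
  "rev_word w = rev (map Not w)"

definition wf_arg :: "('p, 'e) arrow_rg \<Rightarrow> bool" where
  "wf_arg G \<longleftrightarrow>
     finite (Pts G) \<and> finite (Edges G) \<and>
     fpf_inv_on (vx G) (Pts G) \<and> fpf_inv_on (att G) (Pts G) \<and>
     (\<forall>p\<in>Pts G. \<forall>e. edge_of G p = Some e \<longrightarrow> e \<in> Edges G) \<and>
     (\<forall>p\<in>Pts G. edge_of G (att G p) = edge_of G p) \<and>
     (\<forall>e\<in>Edges G. card (edge_pts G e) = 4 \<and> fpf_inv_on (fre G) (edge_pts G e) \<and>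
        (\<forall>p\<in>edge_pts G e. fre G p \<noteq> att G p)) \<and>
     (\<forall>p\<in>Pts G. wvx G (vx G p) = rev_word (wvx G p) \<and> watt G (att G p) = rev_word (watt G p)) \<and>
     (\<forall>p\<in>Pts G. edge_of G p \<noteq> None \<longrightarrow> wfre G (fre G p) = rev_word (wfre G p)) \<and>
     mpt G \<in> Pts G \<and> mpos G \<le> length (wvx G (mpt G))"

text \<open>Partial duality with respect to \<open>F\<close>: for every edge in \<open>F\<close> the roles of
attaching arcs and free arcs are exchanged (old free arcs become arcs lying on
vertex boundaries, the new edge's free arcs run along the removed attaching
arcs); arrows stay on their arcs, vertex arcs and marking are unchanged.\<close>

definition in_edges :: "('p, 'e) arrow_rg \<Rightarrow> 'e set \<Rightarrow> 'p \<Rightarrow> bool" where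
  "in_edges G A p \<longleftrightarrow> (\<exists>e\<in>A. edge_of G p = Some e)"

definition pdual :: "('p, 'e) arrow_rg \<Rightarrow> 'e set \<Rightarrow> ('p, 'e) arrow_rg" where
  "pdual G F = G\<lparr> att := (\<lambda>p. if in_edges G F p then fre G p else att G p),
                  fre := (\<lambda>p. if in_edges G F p then att G p else fre G p),
                  watt := (\<lambda>p. if in_edges G F p then wfre G p else watt G p),
                  wfre := (\<lambda>p. if in_edges G F p then watt G p else wfre G p) \<rparr>"

text \<open>Boundary of the spanning subgraph with edge set \<open>A\<close>: it alternates vertex
arcs and, at each edge point, the free arc if the edge is in \<open>A\<close> and the
attaching arc otherwise.\<close>

definition tau :: "('p, 'e) arrow_rg \<Rightarrow> 'e set \<Rightarrow> 'p \<Rightarrow> 'p" where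
  "tau G A p = (if in_edges G A p then fre G p else att G p)"

definition wtau :: "('p, 'e) arrow_rg \<Rightarrow> 'e set \<Rightarrow> 'p \<Rightarrow> bool list" where
  "wtau G A p = (if in_edges G A p then wfre G p else watt G p)"

definition rho :: "('p, 'e) arrow_rg \<Rightarrow> 'e set \<Rightarrow> 'p \<Rightarrow> 'p" where
  "rho G A p = tau G A (vx G p)"

definition period :: "('p, 'e) arrow_rg \<Rightarrow> 'e set \<Rightarrow> 'p \<Rightarrow> nat" where
  "period G A p = (LEAST n. 0 < n \<and> (rho G A ^^ n) p = p)"

definition walk_word :: "('p, 'e) arrow_rg \<Rightarrow> 'e set \<Rightarrow> 'p \<Rightarrow> bool list" where
  "walk_word G A p = concat (map (\<lambda>i. wvx G ((rho G A ^^ i) p) @ wtau G A (vx G ((rho G A ^^ i) p)))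
                               [0..<period G A p])"

definition bnd_rel :: "('p, 'e) arrow_rg \<Rightarrow> 'e set \<Rightarrow> ('p \<times> 'p) set" where
  "bnd_rel G A = {(p, q). p \<in> Pts G \<and> (q = vx G p \<or> q = tau G A p)}"

definition bcomps :: "('p, 'e) arrow_rg \<Rightarrow> 'e set \<Rightarrow> 'p set set" where
  "bcomps G A = Pts G // (bnd_rel G A)\<^sup>*"

definition marked_comp :: "('p, 'e) arrow_rg \<Rightarrow> 'e set \<Rightarrow> 'p set" where
  "marked_comp G A = (bnd_rel G A)\<^sup>* `` {mpt G}"

definition conn_rel :: "('p, 'e) arrow_rg \<Rightarrow> 'e set \<Rightarrow> ('p \<times> 'p) set" where
  "conn_rel G A = {(p, q). p \<in> Pts G \<and>
      (q = vx G p \<or> q = att G p \<or> (q = fre G p \<and> in_edges G A p))}"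

definition kcomp :: "('p, 'e) arrow_rg \<Rightarrow> 'e set \<Rightarrow> nat" where
  "kcomp G A = card (Pts G // (conn_rel G A)\<^sup>*)"

text \<open>Cancellation of two consecutive arrows pointing in the same direction:
linear reduction, and additionally across the ends for circular words.\<close>

fun red :: "bool list \<Rightarrow> bool list" where
  "red [] = []"
| "red (x # xs) = (case red xs of [] \<Rightarrow> [x] | y # ys \<Rightarrow> (if x = y then ys else x # y # ys))"

function cyc_red :: "bool list \<Rightarrow> bool list" where
  "cyc_red w = (if 2 \<le> length w \<and> hd w = last w then cyc_red (butlast (tl w)) else w)"
  by pat_completeness auto
termination by (relation "measure length") auto

definition circ_j :: "bool list \<Rightarrow> nat" where
  "circ_j w = length (cyc_red (red w)) div 2"

definition Kval :: "(nat \<Rightarrow> 'a::field) \<Rightarrow> nat \<Rightarrow> 'a" where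
  "Kval K j = (if j = 0 then 1 else K j)"

definition marked_val :: "(nat \<Rightarrow> 'a::field) \<Rightarrow> (nat \<Rightarrow> 'a) \<Rightarrow> bool list \<Rightarrow> 'a" where
  "marked_val Lam Lam' w =
     (let r = red w; j = length r div 2 in
      if j = 0 then 1 else if hd r then Lam j else Lam' j)"

text \<open>The arrow Bollobas--Riordan polynomial, evaluated at field values
(\<open>K j\<close>, \<open>Lam j\<close>, \<open>Lam' j\<close> for \<open>j \<ge> 1\<close>; \<open>K_0 = Lambda_0 = Lambda_0' = 1\<close>).\<close>

definition arrowBR :: "('p, 'e) arrow_rg \<Rightarrow> 'a::field \<Rightarrow> ('e \<Rightarrow> 'a) \<Rightarrow> 'a \<Rightarrow>
    (nat \<Rightarrow> 'a) \<Rightarrow> (nat \<Rightarrow> 'a) \<Rightarrow> (nat \<Rightarrow> 'a) \<Rightarrow> 'a" where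
  "arrowBR G a b c K Lam Lam' =
     (\<Sum>A\<in>Pow (Edges G).
        a ^ kcomp G A * (\<Prod>e\<in>A. b e) * c ^ card (bcomps G A) *
        (\<Prod>C\<in>bcomps G A - {marked_comp G A}. Kval K (circ_j (walk_word G A (SOME p. p \<in> C)))) *
        marked_val Lam Lam' (rotate (mpos G) (walk_word G A (mpt G))))"

end

theory Submission
  imports Defs
begin

text \<open>
Partial duality at \<open>F\<close> swaps free and attaching arcs of the edges in
\<open>F\<close>, so \<open>A\<close> in \<open>G\<close> and \<open>A \<triangle> F\<close> in \<open>G\<^sup>F\<close> have literally the same boundary,
arrows and marking included.
\<close>

definition boundary_weight ::
    "('p, 'e) arrow_rg \<Rightarrow> 'a::field \<Rightarrow> (nat \<Rightarrow> 'a) \<Rightarrow> (nat \<Rightarrow> 'a) \<Rightarrow> (nat \<Rightarrow> 'a) \<Rightarrow> 'e set \<Rightarrow> 'a"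
  where
  "boundary_weight G c K Lam Lam' A =
     c ^ card (bcomps G A) *
     (\<Prod>C\<in>bcomps G A - {marked_comp G A}. Kval K (circ_j (walk_word G A (SOME p. p \<in> C)))) *
     marked_val Lam Lam' (rotate (mpos G) (walk_word G A (mpt G)))"

lemma arrowBR_at_one:
  "arrowBR G 1 b c K Lam Lam' =
     (\<Sum>A\<in>Pow (Edges G). (\<Prod>e\<in>A. b e) * boundary_weight G c K Lam Lam' A)"
  unfolding arrowBR_def boundary_weight_def by (simp add: mult.assoc)

lemma pdual_simps [simp]:
  "Pts (pdual G F) = Pts G" "Edges (pdual G F) = Edges G" "vx (pdual G F) = vx G"
  "wvx (pdual G F) = wvx G" "mpt (pdual G F) = mpt G" "mpos (pdual G F) = mpos G"
  by (simp_all add: pdual_def)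

lemma tau_pdual_sym_diff: "tau (pdual G F) (sym_diff A F) = tau G A"
  by (auto simp: fun_eq_iff tau_def pdual_def in_edges_def)

lemma wtau_pdual_sym_diff: "wtau (pdual G F) (sym_diff A F) = wtau G A"
  by (auto simp: fun_eq_iff wtau_def pdual_def in_edges_def)

lemma rho_pdual_sym_diff: "rho (pdual G F) (sym_diff A F) = rho G A"
  by (simp add: fun_eq_iff rho_def tau_pdual_sym_diff)

lemma walk_word_pdual_sym_diff: "walk_word (pdual G F) (sym_diff A F) = walk_word G A"
  by (simp add: fun_eq_iff walk_word_def period_def rho_pdual_sym_diff wtau_pdual_sym_diff)

lemma bnd_rel_pdual_sym_diff: "bnd_rel (pdual G F) (sym_diff A F) = bnd_rel G A"
  by (simp add: bnd_rel_def tau_pdual_sym_diff)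

lemma boundary_weight_pdual_sym_diff:
  "boundary_weight (pdual G F) c K Lam Lam' (sym_diff A F) = boundary_weight G c K Lam Lam' A"
  by (simp add: boundary_weight_def bcomps_def marked_comp_def
      bnd_rel_pdual_sym_diff walk_word_pdual_sym_diff)

lemma bij_betw_sym_diff_Pow:
  assumes "F \<subseteq> E"
  shows "bij_betw (\<lambda>A. sym_diff A F) (Pow E) (Pow E)"
  by (rule bij_betw_byWitness[where f' = "\<lambda>A. sym_diff A F"]) (use assms in auto)

lemma prod_sym_diff_reweight:
  fixes b :: "'e \<Rightarrow> 'a::field"
  assumes "finite A" "finite F" and nz: "\<forall>e\<in>F - A. b e \<noteq> 0"
  shows "(\<Prod>e\<in>A. b e) = (\<Prod>e\<in>F. b e) * (\<Prod>e\<in>sym_diff A F. if e \<in> F then 1 / b e else b e)"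
proof -
  have "(\<Prod>e\<in>sym_diff A F. if e \<in> F then 1 / b e else b e)
      = (\<Prod>e\<in>A - F. b e) * (\<Prod>e\<in>F - A. 1 / b e)"
    by (subst prod.union_disjoint) (use assms in auto)
  moreover have "(\<Prod>e\<in>F. b e) = (\<Prod>e\<in>A \<inter> F. b e) * (\<Prod>e\<in>F - A. b e)"
    using prod.Int_Diff[OF \<open>finite F\<close>, of b A] by (simp add: Int_commute)
  moreover have "(\<Prod>e\<in>A. b e) = (\<Prod>e\<in>A \<inter> F. b e) * (\<Prod>e\<in>A - F. b e)"
    using prod.Int_Diff[OF \<open>finite A\<close>, of b F] by simp
  moreover have "(\<Prod>e\<in>F - A. b e) * (\<Prod>e\<in>F - A. 1 / b e) = 1"
    using nz by (simp add: prod.distrib[symmetric])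
  ultimately show ?thesis
    by (simp add: ac_simps)
qed

theorem mainTheorem8:
  fixes G :: "('p, 'e) arrow_rg" and F :: "'e set"
    and b :: "'e \<Rightarrow> 'a::field" and c :: 'a and K Lam Lam' :: "nat \<Rightarrow> 'a"
  assumes "wf_arg G"
    and "F \<subseteq> Edges G"
    and "\<forall>e\<in>F. b e \<noteq> 0"
  shows "arrowBR G 1 b c K Lam Lam' =
         (\<Prod>e\<in>F. b e) * arrowBR (pdual G F) 1 (\<lambda>e. if e \<in> F then 1 / b e else b e) c K Lam Lam'"
proof -
  let ?b' = "\<lambda>e. if e \<in> F then 1 / b e else b e"
  let ?W = "boundary_weight G c K Lam Lam'"
  have fin: "finite (Edges G)"
    using \<open>wf_arg G\<close> by (simp add: wf_arg_def)
  have "arrowBR (pdual G F) 1 ?b' c K Lam Lam'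
      = (\<Sum>A\<in>Pow (Edges G). (\<Prod>e\<in>sym_diff A F. ?b' e) * ?W A)"
    unfolding arrowBR_at_one pdual_simps
    by (subst sum.reindex_bij_betw[OF bij_betw_sym_diff_Pow[OF \<open>F \<subseteq> Edges G\<close>], symmetric])
      (simp only: boundary_weight_pdual_sym_diff)
  moreover have "(\<Prod>e\<in>A. b e) = (\<Prod>e\<in>F. b e) * (\<Prod>e\<in>sym_diff A F. ?b' e)"
    if "A \<subseteq> Edges G" for A
    using prod_sym_diff_reweight[of A F b] that assms(2,3) fin by (auto intro: finite_subset)
  ultimately show ?thesis
    by (simp add: arrowBR_at_one sum_distrib_left mult.assoc)
qed

end
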